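(* Let $\mathfrak a\subset K$ be a fractional $A_{\infty_1}$-ideal having an $\mathbb F_q$-basis $(\alpha_0=1,\alpha_1,\alpha_2,\dots)$ with $1<|\alpha_1|<|\alpha_2|<\cdots$, and let $\Omega_i^{\mathfrak a}(m)=\sum_{(c_0,\dots,c_{i-1})\in\mathbb F_q^i}(c_0+c_1\alpha_1+\dots+c_{i-1}\alpha_{i-1}+\alpha_i)^{-m}$. Put $\hat\zeta^{\mathfrak a}(m)=\sum_{i\ge1}\Omega_i^{\mathfrak a}(m)$. Then for all $n\in\mathbb N$, $n\ge1$, \[|\hat\zeta^{\mathfrak a}(q^n-1)|=|\Omega_1^{\mathfrak a}(q^n-1)|=|\alpha_1|^{q^n(1-q)}<1.\]
   Context: Let $q$ be a prime power, $k=\mathbb F_q(T)$, $A=\mathbb F_q[T]$, $k_\infty=\mathbb F_q((1/T))$ with $|x|=q^{\deg_T x}$. Let $f\in k_\infty\setminus k$ be a root of $X^2-aX-b$ with $a\in A$ monic, $d=\deg_T a\ge1$, $b\in\mathbb F_q^*$, $|f|=q^d$; $K=k(f)\subset k_\infty$ and $A_{\infty_1}=\mathbb F_q[f,fT,\dots,fT^{d-1}]$ is the ring of elements of $K$ regular away from the place induced by $K\subset k_\infty$. (In the paper's normalization, where the $\alpha_i$ are quotients of monic elements, $\hat\zeta^{\mathfrak a}(m)$ equals the zeta sum over monic elements of $\mathfrak a$ minus $1$.) *)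

theory Defs
  imports "HOL-Computational_Algebra.Computational_Algebra" "HOL-Library.FuncSet" "HOL-Library.Cardinality"
begin

text \<open>k_infinity = F_q((1/T)) is modelled as the Laurent series 'a fls in the
variable u = 1/T, so T = fls_X_inv.  q = CARD('a).\<close>

definition absv :: "'a::{field,finite} fls \<Rightarrow> real" where
  "absv x = (if x = 0 then 0 else real CARD('a) powi (- fls_subdegree x))"

definition polyT :: "'a::{field,finite} poly \<Rightarrow> 'a fls" where
  "polyT p = (\<Sum>i\<le>degree p. fls_const (coeff p i) * fls_X_inv ^ i)"

definition kfield :: "'a::{field,finite} fls set" where
  "kfield = {polyT P / polyT Q | P Q. Q \<noteq> 0}"

definition Kfield :: "'a::{field,finite} fls \<Rightarrow> 'a fls set" where
  "Kfield f = {x + y * f | x y. x \<in> kfield \<and> y \<in> kfield}"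

inductive_set Ainf1 :: "'a::{field,finite} fls \<Rightarrow> nat \<Rightarrow> 'a fls set" for f d where
  const: "fls_const c \<in> Ainf1 f d"
| gen: "j < d \<Longrightarrow> f * fls_X_inv ^ j \<in> Ainf1 f d"
| add: "x \<in> Ainf1 f d \<Longrightarrow> y \<in> Ainf1 f d \<Longrightarrow> x + y \<in> Ainf1 f d"
| mult: "x \<in> Ainf1 f d \<Longrightarrow> y \<in> Ainf1 f d \<Longrightarrow> x * y \<in> Ainf1 f d"

definition fractional_ideal :: "'a::field set \<Rightarrow> 'a set \<Rightarrow> 'a set \<Rightarrow> bool" where
  "fractional_ideal R K I \<longleftrightarrow> I \<subseteq> K \<and> I \<noteq> {0} \<and> 0 \<in> I \<and>
     (\<forall>x\<in>I. \<forall>y\<in>I. x + y \<in> I) \<and> (\<forall>r\<in>R. \<forall>x\<in>I. r * x \<in> I) \<and>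
     (\<exists>c\<in>R. c \<noteq> 0 \<and> (\<forall>x\<in>I. c * x \<in> R))"

definition Fq_basis :: "(nat \<Rightarrow> 'a::{field,finite} fls) \<Rightarrow> 'a fls set \<Rightarrow> bool" where
  "Fq_basis \<alpha> I \<longleftrightarrow> (\<forall>i. \<alpha> i \<in> I) \<and>
     (\<forall>x\<in>I. \<exists>!c::nat \<Rightarrow> 'a. finite {i. c i \<noteq> 0} \<and>
        x = (\<Sum>i\<in>{i. c i \<noteq> 0}. fls_const (c i) * \<alpha> i))"

definition Omega :: "(nat \<Rightarrow> 'a::{field,finite} fls) \<Rightarrow> nat \<Rightarrow> nat \<Rightarrow> 'a fls" where
  "Omega \<alpha> i m = (\<Sum>c\<in>({..<i} \<rightarrow>\<^sub>E (UNIV::'a set)).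
      inverse ((\<Sum>j<i. fls_const (c j) * \<alpha> j) + \<alpha> i) ^ m)"

definition fls_sums :: "(nat \<Rightarrow> 'a::{field,finite} fls) \<Rightarrow> 'a fls \<Rightarrow> bool" where
  "fls_sums g S \<longleftrightarrow> (\<lambda>n. absv (S - (\<Sum>i<n. g i))) \<longlonglongrightarrow> 0"

end

theory Submission
  imports Defs
begin

text \<open>For |y| > 1 and Q = q^n the sum of (y + c)^(1 - Q) over c in F_q can be evaluated in
  closed form: from the identity \<Prod>c (T + c) = T^q - T one gets (y + c)^Q = y^Q + c and, by
  logarithmic differentiation, \<Sum>c 1/(X + c) = -1/(X^q - X); together these give
  (y^Q - y) / (y^(qQ) - y^Q), of absolute value |y|^(Q(1 - q)).
  Grouping the terms of Omega_i by c_0 writes Omega_i as a sum of such expressions at points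
  of absolute value |alpha_i|, so |Omega_i| \<le> |alpha_i|^(Q(1 - q)), with equality for i = 1.
  Since the absolute value takes values in q^\<int>, strict growth gives |alpha_(i+1)| \<ge> q^i |alpha_1|;
  hence the series converges coefficientwise, and since the absolute value is non-archimedean
  its sum has the absolute value of its first term Omega_1.\<close>

section \<open>The absolute value on Laurent series\<close>

lemma card_field_ge_2: "2 \<le> CARD('a::{field,finite})"
proof -
  have "card {0::'a, 1} \<le> CARD('a)"
    by (rule card_mono) auto
  then show ?thesis
    by simp
qed

lemma power_int_strict_increasing_iff:
  fixes x :: "'a::linordered_field"
  assumes "1 < x"
  shows "x powi m < x powi n \<longleftrightarrow> m < n"
  using assms power_int_strict_increasing[of m n x] power_int_increasing[of n m x]
  by (meson linorder_not_less order_less_imp_le)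

lemma absv_nonneg: "0 \<le> absv (x::'a::{field,finite} fls)"
  by (simp add: absv_def)

lemma absv_0 [simp]: "absv (0::'a::{field,finite} fls) = 0"
  by (simp add: absv_def)

lemma absv_1 [simp]: "absv (1::'a::{field,finite} fls) = 1"
  by (simp add: absv_def)

lemma absv_eq_0_iff [simp]: "absv (x::'a::{field,finite} fls) = 0 \<longleftrightarrow> x = 0"
  using card_field_ge_2[where 'a='a] by (simp add: absv_def)

lemma absv_pos_iff: "0 < absv (x::'a::{field,finite} fls) \<longleftrightarrow> x \<noteq> 0"
  using absv_nonneg[of x] absv_eq_0_iff[of x] by linarith

lemma absv_minus [simp]: "absv (- x) = absv (x::'a::{field,finite} fls)"
  by (simp add: absv_def)

lemma absv_mult: "absv (x * y) = absv x * absv (y::'a::{field,finite} fls)"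
  using card_field_ge_2[where 'a='a] by (simp add: absv_def power_int_diff power_int_minus divide_inverse)

lemma absv_inverse: "absv (inverse x) = inverse (absv (x::'a::{field,finite} fls))"
  by (simp add: absv_def power_int_minus)

lemma absv_power: "absv (x ^ n) = absv (x::'a::{field,finite} fls) ^ n"
  by (induction n) (simp_all add: absv_mult)

lemma absv_const_le_1: "absv (fls_const (c::'a::{field,finite})) \<le> 1"
  by (simp add: absv_def)

lemma absv_less_iff_subdegree:
  fixes x y :: "'a::{field,finite} fls"
  assumes "x \<noteq> 0" "y \<noteq> 0"
  shows "absv x < absv y \<longleftrightarrow> fls_subdegree y < fls_subdegree x"
  using assms card_field_ge_2[where 'a='a]
  by (simp add: absv_def power_int_strict_increasing_iff)

lemma absv_add_le_max: "absv (x + y) \<le> max (absv x) (absv (y::'a::{field,finite} fls))"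
proof (cases "x = 0 \<or> y = 0 \<or> x + y = 0")
  case False
  then have "min (fls_subdegree x) (fls_subdegree y) \<le> fls_subdegree (x + y)"
    by (intro fls_plus_subdegree) auto
  with False show ?thesis
    using absv_less_iff_subdegree[of x "x + y"] absv_less_iff_subdegree[of y "x + y"]
    by (auto simp: max_def min_def not_less split: if_splits)
qed (auto simp: absv_nonneg le_max_iff_disj)

lemma absv_add_eq_left:
  fixes x y :: "'a::{field,finite} fls"
  assumes "absv y < absv x"
  shows "absv (x + y) = absv x"
proof (cases "y = 0")
  case False
  have "x \<noteq> 0"
    using assms absv_nonneg[of y] by auto
  with False assms have less: "fls_subdegree x < fls_subdegree y"
    by (simp add: absv_less_iff_subdegree)
  then have "x + y \<noteq> 0"
    by (metis add_eq_0_iff fls_uminus_subdegree less_irrefl)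
  with \<open>x \<noteq> 0\<close> less show ?thesis
    by (simp add: absv_def fls_subdegree_add_eq1)
qed simp

lemma absv_diff_eq_left:
  fixes x y :: "'a::{field,finite} fls"
  assumes "absv y < absv x"
  shows "absv (x - y) = absv x"
  using absv_add_eq_left[of "- y" x] assms by simp

lemma absv_sum_le:
  fixes f :: "'b \<Rightarrow> 'a::{field,finite} fls"
  assumes "\<And>a. a \<in> A \<Longrightarrow> absv (f a) \<le> B" "0 \<le> B"
  shows "absv (sum f A) \<le> B"
  using assms
proof (induction A rule: infinite_finite_induct)
  case (insert a A)
  then show ?case
    by (auto intro: order.trans[OF absv_add_le_max])
qed simp_all

lemma absv_sum_less:
  fixes f :: "'b \<Rightarrow> 'a::{field,finite} fls"
  assumes "\<And>a. a \<in> A \<Longrightarrow> absv (f a) < B" "0 < B"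
  shows "absv (sum f A) < B"
  using assms
proof (induction A rule: infinite_finite_induct)
  case (insert a A)
  then show ?case
    by (auto intro: order.strict_trans1[OF absv_add_le_max])
qed simp_all

text \<open>The values of absv are integral powers of q, so a strict inequality loses a factor q.\<close>
lemma card_mult_absv_le:
  fixes x y :: "'a::{field,finite} fls"
  assumes "x \<noteq> 0" "absv x < absv y"
  shows "real CARD('a) * absv x \<le> absv y"
proof -
  have q: "1 < real CARD('a)"
    using card_field_ge_2[where 'a='a] by simp
  have "y \<noteq> 0"
    using assms absv_nonneg[of x] by auto
  with assms have "fls_subdegree y \<le> fls_subdegree x - 1"
    by (simp add: absv_less_iff_subdegree)
  then have "real CARD('a) powi (1 - fls_subdegree x) \<le> real CARD('a) powi (- fls_subdegree y)"
    using q by (intro power_int_increasing) auto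
  with assms \<open>y \<noteq> 0\<close> q show ?thesis
    by (simp add: absv_def power_int_diff power_int_minus divide_inverse)
qed

lemma fls_nth_eq_0_if_absv_less:
  fixes x :: "'a::{field,finite} fls"
  assumes "absv x < inverse (real CARD('a) ^ i)" "k \<le> int i"
  shows "fls_nth x k = 0"
proof (cases "x = 0")
  case False
  with assms card_field_ge_2[where 'a='a] have "int i < fls_subdegree x"
    by (simp add: absv_def power_int_strict_increasing_iff flip: power_int_minus power_int_of_nat)
  with assms show ?thesis
    by simp
qed simp

lemma absv_le_if_fls_nth_eq_0:
  fixes x :: "'a::{field,finite} fls"
  assumes "\<And>k. k < int N \<Longrightarrow> fls_nth x k = 0"
  shows "absv x \<le> inverse (real CARD('a) ^ N)"
proof (cases "x = 0")
  case False
  with assms have "int N \<le> fls_subdegree x"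
    by (intro fls_subdegree_geI)
  with False card_field_ge_2[where 'a='a] show ?thesis
    by (simp add: absv_def power_int_increasing flip: power_int_minus power_int_of_nat)
qed simp

lemma card_power_mult_absv_le:
  fixes x :: "nat \<Rightarrow> 'a::{field,finite} fls"
  assumes "x 0 \<noteq> 0" and increasing: "\<And>i. absv (x i) < absv (x (Suc i))"
  shows "real CARD('a) ^ i * absv (x 0) \<le> absv (x i)"
proof (induction i)
  case (Suc i)
  have "0 < real CARD('a) ^ i * absv (x 0)"
    using assms(1) card_field_ge_2[where 'a='a] by (simp add: absv_pos_iff)
  with Suc.IH have "x i \<noteq> 0"
    by auto
  have "real CARD('a) ^ Suc i * absv (x 0) = real CARD('a) * (real CARD('a) ^ i * absv (x 0))"
    by simp
  also have "\<dots> \<le> real CARD('a) * absv (x i)"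
    using Suc.IH by (intro mult_left_mono) simp_all
  also have "\<dots> \<le> absv (x (Suc i))"
    using \<open>x i \<noteq> 0\<close> increasing by (rule card_mult_absv_le)
  finally show ?case .
qed simp

section \<open>Convergent series\<close>

lemma fls_sums_exI:
  fixes t :: "nat \<Rightarrow> 'a::{field,finite} fls"
  assumes small: "\<And>i. absv (t i) < inverse (real CARD('a) ^ i)"
  shows "\<exists>Z. fls_sums t Z"
proof -
  define S where "S N = (\<Sum>i<N. t i)" for N
  have t_nth: "fls_nth (t i) k = 0" if "k \<le> int i" for i k
    using small that by (rule fls_nth_eq_0_if_absv_less)
  have S_nth_stable: "fls_nth (S N) k = fls_nth (S M) k" if "M \<le> N" "k < int M" for M N k
    using that(1)
  proof (induction N rule: dec_induct)
    case (step N)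
    then show ?case
      using t_nth[of k N] that(2) by (simp add: S_def)
  qed simp
  define Z where "Z = Abs_fls (\<lambda>k. fls_nth (S (nat k + 1)) k)"
  have Z_nth: "fls_nth Z k = fls_nth (S (nat k + 1)) k" for k
    unfolding Z_def
  proof (rule nth_Abs_fls_ex_lower_bound, intro exI allI impI)
    fix k :: int
    assume "k < 0"
    then show "fls_nth (S (nat k + 1)) k = 0"
      using t_nth[of k 0] by (simp add: S_def)
  qed
  have "fls_nth (Z - S N) k = 0" if "k < int N" for N k
  proof (cases "nat k + 1 \<le> N")
    case True
    then show ?thesis
      using S_nth_stable[of "nat k + 1" N k] by (simp add: Z_nth)
  next
    case False
    then show ?thesis
      using S_nth_stable[of N "nat k + 1" k] that by (simp add: Z_nth)
  qed
  then have upper: "absv (Z - S N) \<le> inverse (real CARD('a) ^ N)" for N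
    by (rule absv_le_if_fls_nth_eq_0)
  have lim: "(\<lambda>N. inverse (real CARD('a) ^ N)) \<longlonglongrightarrow> 0"
    using card_field_ge_2[where 'a='a] by (intro LIMSEQ_inverse_realpow_zero) simp
  have "(\<lambda>N. absv (Z - S N)) \<longlonglongrightarrow> 0"
  proof (rule tendsto_sandwich[OF _ _ tendsto_const lim])
    show "\<forall>\<^sub>F N in sequentially. 0 \<le> absv (Z - S N)"
      by (simp add: absv_nonneg)
    show "\<forall>\<^sub>F N in sequentially. absv (Z - S N) \<le> inverse (real CARD('a) ^ N)"
      by (simp add: upper)
  qed
  then show ?thesis
    unfolding fls_sums_def S_def by blast
qed

lemma absv_fls_sums_eq_first:
  fixes t :: "nat \<Rightarrow> 'a::{field,finite} fls"
  assumes sums: "fls_sums t Z" and dominant: "\<And>i. 1 \<le> i \<Longrightarrow> absv (t i) < absv (t 0)"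
  shows "absv Z = absv (t 0)"
proof -
  have "0 < absv (t 0)"
    using dominant[of 1] absv_nonneg[of "t 1"] by linarith
  with sums have "\<forall>\<^sub>F N in sequentially. absv (Z - (\<Sum>i<N. t i)) < absv (t 0)"
    unfolding fls_sums_def by (rule order_tendstoD(2))
  then obtain N where N: "absv (Z - (\<Sum>i<Suc N. t i)) < absv (t 0)"
    unfolding eventually_sequentially by (meson le_SucI order_refl)
  define S where "S = (\<Sum>i<Suc N. t i)"
  have "absv (\<Sum>i<N. t (Suc i)) < absv (t 0)"
    using dominant \<open>0 < absv (t 0)\<close> by (intro absv_sum_less) auto
  then have "absv S = absv (t 0)"
    unfolding S_def sum.lessThan_Suc_shift by (rule absv_add_eq_left)
  moreover from N this have "absv (S + (Z - S)) = absv S"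
    by (intro absv_add_eq_left) (simp add: S_def)
  ultimately show ?thesis
    by simp
qed

section \<open>Sums over the translates of a Laurent series by constants\<close>

text \<open>The library's finite_field_power_card_eq_same needs the class finite_field, which a
  type variable of sort {field, finite} does not belong to.\<close>
lemma power_card_eq_self: "x ^ CARD('a) = (x::'a::{field,finite})"
proof (cases "x = 0")
  case False
  let ?U = "UNIV - {0::'a}"
  have "\<Prod>?U = (\<Prod>y\<in>?U. x * y)"
    by (rule prod.reindex_bij_witness[of _ "\<lambda>y. x * y" "\<lambda>y. y / x"]) (use False in auto)
  also have "\<dots> = x ^ (CARD('a) - 1) * \<Prod>?U"
    by (simp add: prod.distrib card_Diff_singleton)
  finally have "x ^ (CARD('a) - 1) = 1"
    by simp
  then have "x * x ^ (CARD('a) - 1) = x"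
    by simp
  then show ?thesis
    using card_field_ge_2[where 'a='a] by (simp flip: power_Suc)
qed (use card_field_ge_2[where 'a='a] in simp)

lemma of_nat_card_eq_0: "of_nat CARD('a) = (0::'a::{field,finite})"
proof -
  have "(\<Sum>x\<in>UNIV. x) = (\<Sum>x\<in>UNIV. x + (1::'a))"
    by (rule sum.reindex_bij_witness[of _ "\<lambda>x. x + 1" "\<lambda>x. x - 1"]) auto
  then show ?thesis
    by (simp add: sum.distrib)
qed

text \<open>Both sides are monic of degree q, and their difference vanishes at the q constants
  because c^q = c.\<close>
lemma prod_linear_eq_monom_card:
  "(\<Prod>c\<in>UNIV. [:fls_const c, 1:]) = (monom 1 CARD('a) - monom 1 1 :: 'a::{field,finite} fls poly)"
  (is "?P = ?R")
proof (rule ccontr)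
  assume "?P \<noteq> ?R"
  then have D: "?P - ?R \<noteq> 0"
    by simp
  have q: "2 \<le> CARD('a)"
    by (rule card_field_ge_2)
  have deg: "degree ?P = CARD('a)"
    by (simp add: degree_prod_sum_eq)
  have lc: "lead_coeff ?P = 1"
    by (simp add: lead_coeff_prod)
  have coeff_high: "coeff (?P - ?R) k = 0" if "CARD('a) \<le> k" for k
  proof (cases "k = CARD('a)")
    case True
    then show ?thesis
      using lc deg q by (simp add: coeff_monom)
  next
    case False
    then show ?thesis
      using that deg q by (simp add: coeff_monom coeff_eq_0)
  qed
  have "degree (?P - ?R) \<le> CARD('a) - 1"
    by (rule degree_le) (use coeff_high in auto)
  have "range fls_const \<subseteq> {x. poly (?P - ?R) x = (0::'a fls)}"
  proof safe
    fix d :: 'a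
    have "poly ?P (fls_const d) = 0"
      unfolding poly_prod by (rule prod_zero) (auto simp: fls_plus_const intro!: exI[of _ "- d"])
    then show "poly (?P - ?R) (fls_const d) = 0"
      by (simp add: poly_monom power_card_eq_self flip: fls_const_power)
  qed
  then have "card (range (fls_const :: 'a \<Rightarrow> 'a fls)) \<le> card {x. poly (?P - ?R) x = 0}"
    by (intro card_mono poly_roots_finite D)
  also have "\<dots> \<le> degree (?P - ?R)"
    by (rule card_poly_roots_bound[OF D])
  also have "card (range (fls_const :: 'a \<Rightarrow> 'a fls)) = CARD('a)"
    by (rule card_image, rule injI) (metis fls_const_nth)
  finally show False
    using \<open>degree (?P - ?R) \<le> CARD('a) - 1\<close> q by simp
qed

lemma prod_add_const_eq: "(\<Prod>c\<in>UNIV. z + fls_const c) = z ^ CARD('a) - (z::'a::{field,finite} fls)"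
  using arg_cong[OF prod_linear_eq_monom_card, of "\<lambda>p. poly p z"]
  by (simp add: poly_prod poly_monom add.commute)

text \<open>Logarithmic derivative of the previous identity; the derivative of T^q - T is -1.\<close>
lemma sum_prod_add_const_eq:
  "(\<Sum>c\<in>UNIV. \<Prod>c'\<in>UNIV - {c}. z + fls_const c') = (- 1 :: 'a::{field,finite} fls)"
proof -
  have "of_nat CARD('a) = (0::'a fls)"
    by (simp add: fls_of_nat of_nat_card_eq_0)
  then have "(\<Sum>c\<in>UNIV. \<Prod>c'\<in>UNIV - {c}. [:fls_const c', 1:]) = (- 1 :: 'a fls poly)"
    using arg_cong[OF prod_linear_eq_monom_card[where 'a='a], of pderiv]
    by (simp add: pderiv_prod pderiv_diff pderiv_monom pderiv_pCons)
  from arg_cong[OF this, of "\<lambda>p. poly p z"] show ?thesis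
    by (simp add: poly_sum poly_prod add.commute)
qed

lemma add_const_power_card:
  "(z + fls_const c) ^ CARD('a) = z ^ CARD('a) + fls_const (c::'a::{field,finite})"
proof -
  have "(z + fls_const c) ^ CARD('a) - (z + fls_const c) = (\<Prod>d\<in>UNIV. (z + fls_const c) + fls_const d)"
    by (rule prod_add_const_eq[symmetric])
  also have "\<dots> = (\<Prod>d\<in>UNIV. z + fls_const d)"
    by (rule prod.reindex_bij_witness[of _ "\<lambda>d. d - c" "\<lambda>d. c + d"])
       (auto simp: add.assoc simp flip: fls_plus_const)
  also have "\<dots> = z ^ CARD('a) - z"
    by (rule prod_add_const_eq)
  finally show ?thesis
    by (simp add: algebra_simps)
qed

lemma add_const_power_card_power:
  "(z + fls_const c) ^ (CARD('a) ^ n) = z ^ (CARD('a) ^ n) + fls_const (c::'a::{field,finite})"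
  by (induction n arbitrary: z) (simp_all add: power_mult add_const_power_card)

lemma sum_inverse_add_const:
  fixes z :: "'a::{field,finite} fls"
  assumes "\<And>c. z + fls_const c \<noteq> 0"
  shows "(\<Sum>c\<in>UNIV. inverse (z + fls_const c)) = - inverse (z ^ CARD('a) - z)"
proof -
  define P where "P = (\<Prod>c\<in>UNIV. z + fls_const c)"
  have "P \<noteq> 0"
    using assms by (simp add: P_def)
  have "inverse (z + fls_const c) = (\<Prod>c'\<in>UNIV - {c}. z + fls_const c') / P" for c
  proof -
    have "P = (z + fls_const c) * (\<Prod>c'\<in>UNIV - {c}. z + fls_const c')"
      unfolding P_def by (rule prod.remove) simp_all
    with assms[of c] \<open>P \<noteq> 0\<close> show ?thesis
      by (simp add: field_simps)
  qed
  then have "(\<Sum>c\<in>UNIV. inverse (z + fls_const c)) = (\<Sum>c\<in>UNIV. \<Prod>c'\<in>UNIV - {c}. z + fls_const c') / P"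
    by (simp add: sum_divide_distrib)
  then show ?thesis
    by (simp add: sum_prod_add_const_eq P_def prod_add_const_eq inverse_eq_divide)
qed

definition shift_sum :: "'a::{field,finite} fls \<Rightarrow> nat \<Rightarrow> 'a fls" where
  "shift_sum y m = (\<Sum>c\<in>UNIV. inverse (y + fls_const c) ^ m)"

text \<open>With X = y^Q, Frobenius gives (y + c)^(1 - Q) = (y + c) / (X + c) = 1 + (y - X) / (X + c),
  and the q summands 1 cancel.\<close>
lemma shift_sum_card_power_eq:
  fixes y :: "'a::{field,finite} fls"
  assumes nz: "\<And>c. y + fls_const c \<noteq> 0" and Q: "Q = CARD('a) ^ n"
  shows "shift_sum y (Q - 1) = (y ^ Q - y) / ((y ^ Q) ^ CARD('a) - y ^ Q)"
proof -
  define X where "X = y ^ Q"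
  have X_add: "X + fls_const c = (y + fls_const c) ^ Q" for c
    by (simp add: X_def Q add_const_power_card_power)
  then have X_add_nz: "X + fls_const c \<noteq> 0" for c
    using nz by simp
  have Q_Suc: "Q = Suc (Q - 1)"
    using Q by simp
  have "inverse (y + fls_const c) ^ (Q - 1) = 1 + (y - X) * inverse (X + fls_const c)" for c
  proof -
    define a where "a = y + fls_const c"
    have "inverse a ^ (Q - 1) = a * inverse (a * a ^ (Q - 1))"
      using nz[of c] by (simp add: a_def power_inverse)
    also have "a * a ^ (Q - 1) = X + fls_const c"
      using Q_Suc by (metis X_add a_def power_Suc)
    finally show ?thesis
      using X_add_nz[of c] by (simp add: a_def field_simps)
  qed
  then have "shift_sum y (Q - 1) = of_nat CARD('a) + (y - X) * (\<Sum>c\<in>UNIV. inverse (X + fls_const c))"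
    by (simp add: shift_sum_def sum.distrib sum_distrib_left)
  also have "\<dots> = (X - y) / (X ^ CARD('a) - X)"
    using X_add_nz by (simp add: fls_of_nat of_nat_card_eq_0 sum_inverse_add_const divide_inverse
                                 minus_mult_left)
  finally show ?thesis
    by (simp add: X_def)
qed

lemma absv_shift_sum:
  fixes y :: "'a::{field,finite} fls"
  assumes y: "1 < absv y" and n: "1 \<le> n"
  shows "absv (shift_sum y (CARD('a) ^ n - 1)) = inverse (absv y ^ (CARD('a) ^ n * (CARD('a) - 1)))"
proof -
  define q Q b where "q = CARD('a)" and "Q = q ^ n" and "b = absv y"
  have q: "2 \<le> q"
    unfolding q_def by (rule card_field_ge_2)
  have "q ^ 1 \<le> Q"
    unfolding Q_def using q n by (intro power_increasing) auto
  then have "b < b ^ Q" "b ^ Q < (b ^ Q) ^ q"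
    using q y power_strict_increasing[of 1 Q b] power_strict_increasing[of 1 q "b ^ Q"]
    by (simp_all add: b_def)
  moreover have "y + fls_const c \<noteq> 0" for c
    using absv_add_eq_left[of "fls_const c" y] absv_const_le_1[of c] y by auto
  then have "shift_sum y (Q - 1) = (y ^ Q - y) / ((y ^ Q) ^ q - y ^ Q)"
    unfolding q_def by (rule shift_sum_card_power_eq) (simp add: Q_def q_def)
  ultimately have "absv (shift_sum y (Q - 1)) = b ^ Q / (b ^ Q) ^ q"
    by (simp add: absv_diff_eq_left absv_power absv_mult absv_inverse divide_inverse b_def)
  also have "(b ^ Q) ^ q = b ^ Q * b ^ (Q * (q - 1))"
    using q by (simp flip: power_mult power_add add: algebra_simps)
  also have "b ^ Q / (b ^ Q * b ^ (Q * (q - 1))) = inverse (b ^ (Q * (q - 1)))"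
    using y by (auto simp: b_def field_simps)
  finally show ?thesis
    by (simp add: Q_def q_def b_def)
qed

section \<open>The sums Omega\<close>

lemma Omega_eq_sum_shift_sum:
  fixes \<alpha> :: "nat \<Rightarrow> 'a::{field,finite} fls"
  assumes "1 \<le> i" "\<alpha> 0 = 1"
  shows "Omega \<alpha> i m =
    (\<Sum>g\<in>{1..<i} \<rightarrow>\<^sub>E UNIV. shift_sum (\<alpha> i + (\<Sum>j=1..<i. fls_const (g j) * \<alpha> j)) m)"
proof -
  define L where "L g = (\<Sum>j=1..<i. fls_const (g j) * \<alpha> j)" for g :: "nat \<Rightarrow> 'a"
  define F where "F g = inverse ((\<Sum>j<i. fls_const (g j) * \<alpha> j) + \<alpha> i) ^ m" for g
  have lessThan: "{..<i} = insert 0 {1..<i}"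
    using assms(1) by auto
  have F_upd: "F (g(0 := c)) = inverse (\<alpha> i + L g + fls_const c) ^ m" for g c
  proof -
    have "(\<Sum>j<i. fls_const ((g(0 := c)) j) * \<alpha> j) = fls_const c + L g"
      using assms(2) by (simp add: lessThan L_def)
    then show ?thesis
      by (simp add: F_def algebra_simps)
  qed
  have "{..<i} \<rightarrow>\<^sub>E (UNIV::'a set) = (\<lambda>(c, g). g(0 := c)) ` (UNIV \<times> ({1..<i} \<rightarrow>\<^sub>E UNIV))"
    unfolding lessThan by (rule PiE_insert_eq)
  moreover have "inj_on (\<lambda>(c, g). g(0 := c)) (UNIV \<times> ({1..<i} \<rightarrow>\<^sub>E (UNIV::'a set)))"
    using inj_combinator[of 0 "{1..<i}" "\<lambda>_. UNIV"] by simp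
  ultimately have "Omega \<alpha> i m = (\<Sum>(c, g)\<in>UNIV \<times> ({1..<i} \<rightarrow>\<^sub>E UNIV). F (g(0 := c)))"
    unfolding Omega_def F_def[symmetric] by (simp add: sum.reindex case_prod_unfold)
  also have "\<dots> = (\<Sum>g\<in>{1..<i} \<rightarrow>\<^sub>E UNIV. \<Sum>c\<in>UNIV. F (g(0 := c)))"
    by (simp add: sum.cartesian_product[symmetric] sum.swap[of _ UNIV])
  finally show ?thesis
    by (simp add: F_upd shift_sum_def L_def)
qed

context
  fixes \<alpha> :: "nat \<Rightarrow> 'a::{field,finite} fls"
  assumes alpha_0: "\<alpha> 0 = 1" and alpha_1: "1 < absv (\<alpha> 1)"
    and alpha_increasing: "\<And>i. 1 \<le> i \<Longrightarrow> absv (\<alpha> i) < absv (\<alpha> (Suc i))"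
begin

lemma absv_alpha_less: "1 \<le> j \<Longrightarrow> j < i \<Longrightarrow> absv (\<alpha> j) < absv (\<alpha> i)"
  using lift_Suc_mono_less[of "\<lambda>k. absv (\<alpha> (Suc k))" "j - 1" "i - 1"] alpha_increasing by simp

lemma one_less_absv_alpha: "1 \<le> i \<Longrightarrow> 1 < absv (\<alpha> i)"
  using absv_alpha_less[of 1 i] alpha_1 by (cases "i = 1") simp_all

lemma card_power_mult_absv_alpha_le: "real CARD('a) ^ i * absv (\<alpha> 1) \<le> absv (\<alpha> (Suc i))"
proof -
  have "\<alpha> 1 \<noteq> 0"
    using alpha_1 by auto
  then show ?thesis
    using card_power_mult_absv_le[of "\<lambda>k. \<alpha> (Suc k)" i] alpha_increasing by simp
qed

lemma absv_Omega_1: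
  assumes "1 \<le> n"
  shows "absv (Omega \<alpha> 1 (CARD('a) ^ n - 1)) = inverse (absv (\<alpha> 1) ^ (CARD('a) ^ n * (CARD('a) - 1)))"
proof -
  have "Omega \<alpha> 1 m = shift_sum (\<alpha> 1) m" for m
    using Omega_eq_sum_shift_sum[of 1 \<alpha>] alpha_0 by simp
  then show ?thesis
    using absv_shift_sum[OF alpha_1 assms] by simp
qed

lemma absv_Omega_le:
  assumes "1 \<le> i" "1 \<le> n"
  shows "absv (Omega \<alpha> i (CARD('a) ^ n - 1)) \<le> inverse (absv (\<alpha> i) ^ (CARD('a) ^ n * (CARD('a) - 1)))"
proof -
  have "absv (\<alpha> i + (\<Sum>j=1..<i. fls_const (g j) * \<alpha> j)) = absv (\<alpha> i)" for g :: "nat \<Rightarrow> 'a"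
  proof (rule absv_add_eq_left, rule absv_sum_less)
    fix j
    assume "j \<in> {1..<i}"
    then have "absv (\<alpha> j) < absv (\<alpha> i)"
      by (simp add: absv_alpha_less)
    moreover have "absv (fls_const (g j)) * absv (\<alpha> j) \<le> absv (\<alpha> j)"
      by (rule mult_left_le_one_le) (simp_all add: absv_nonneg absv_const_le_1)
    ultimately show "absv (fls_const (g j) * \<alpha> j) < absv (\<alpha> i)"
      by (simp add: absv_mult)
  qed (use one_less_absv_alpha[OF assms(1)] in simp)
  then show ?thesis
    unfolding Omega_eq_sum_shift_sum[of i \<alpha>, OF assms(1) alpha_0]
  proof (intro absv_sum_le)
    fix g :: "nat \<Rightarrow> 'a"
    assume "absv (\<alpha> i + (\<Sum>j=1..<i. fls_const (g j) * \<alpha> j)) = absv (\<alpha> i)" for g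
    then show "absv (shift_sum (\<alpha> i + (\<Sum>j=1..<i. fls_const (g j) * \<alpha> j)) (CARD('a) ^ n - 1))
        \<le> inverse (absv (\<alpha> i) ^ (CARD('a) ^ n * (CARD('a) - 1)))"
      using absv_shift_sum[of "\<alpha> i + (\<Sum>j=1..<i. fls_const (g j) * \<alpha> j)" n]
        one_less_absv_alpha[OF assms(1)] assms(2) by simp
  qed (simp add: absv_nonneg)
qed

lemma absv_Omega_less_absv_Omega_1:
  assumes "2 \<le> i" "1 \<le> n"
  shows "absv (Omega \<alpha> i (CARD('a) ^ n - 1)) < absv (Omega \<alpha> 1 (CARD('a) ^ n - 1))"
proof -
  define K where "K = CARD('a) ^ n * (CARD('a) - 1)"
  have "0 < K"
    using card_field_ge_2[where 'a='a] by (simp add: K_def)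
  with assms(1) alpha_1 have "absv (\<alpha> 1) ^ K < absv (\<alpha> i) ^ K"
    by (intro power_strict_mono absv_alpha_less) simp_all
  then have "inverse (absv (\<alpha> i) ^ K) < inverse (absv (\<alpha> 1) ^ K)"
    using alpha_1 by (intro less_imp_inverse_less) simp_all
  then show ?thesis
    using absv_Omega_le[of i n] absv_Omega_1[OF assms(2)] assms by (simp add: K_def)
qed

lemma absv_Omega_Suc_less:
  assumes "1 \<le> n"
  shows "absv (Omega \<alpha> (Suc i) (CARD('a) ^ n - 1)) < inverse (real CARD('a) ^ i)"
proof -
  define x K where "x = absv (\<alpha> (Suc i))" and "K = CARD('a) ^ n * (CARD('a) - 1)"
  have q: "2 \<le> CARD('a)"
    by (rule card_field_ge_2)
  have x: "1 < x"
    using one_less_absv_alpha[of "Suc i"] by (simp add: x_def)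
  have "real CARD('a) ^ i < real CARD('a) ^ i * absv (\<alpha> 1)"
    using alpha_1 q by simp
  also have "\<dots> \<le> x"
    unfolding x_def by (rule card_power_mult_absv_alpha_le)
  finally have "inverse x < inverse (real CARD('a) ^ i)"
    using q by (intro less_imp_inverse_less) simp_all
  moreover have "x ^ 1 \<le> x ^ K"
    using x q by (intro power_increasing) (simp_all add: K_def)
  then have "inverse (x ^ K) \<le> inverse x"
    using x by (intro le_imp_inverse_le) simp_all
  ultimately show ?thesis
    using absv_Omega_le[of "Suc i" n] assms by (simp add: x_def K_def)
qed

end

theorem corollary1:
  fixes a :: "'a::{field,finite} poly" and b :: 'a and f :: "'a fls"
    and I :: "'a fls set" and \<alpha> :: "nat \<Rightarrow> 'a fls" and n :: nat
  assumes "lead_coeff a = 1" and "degree a \<ge> 1" and "b \<noteq> 0"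
    and "f \<notin> kfield" and "f ^ 2 - polyT a * f - fls_const b = 0"
    and "absv f = real CARD('a) ^ degree a"
    and "fractional_ideal (Ainf1 f (degree a)) (Kfield f) I"
    and "Fq_basis \<alpha> I" and "\<alpha> 0 = 1" and "1 < absv (\<alpha> 1)"
    and "\<And>i. i \<ge> 1 \<Longrightarrow> absv (\<alpha> i) < absv (\<alpha> (Suc i))"
    and "n \<ge> 1"
  shows "\<exists>Z. fls_sums (\<lambda>i. Omega \<alpha> (Suc i) (CARD('a) ^ n - 1)) Z \<and>
           absv Z = absv (Omega \<alpha> 1 (CARD('a) ^ n - 1)) \<and>
           absv (Omega \<alpha> 1 (CARD('a) ^ n - 1))
             = absv (\<alpha> 1) powi (int (CARD('a) ^ n) * (1 - int CARD('a))) \<and>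
           absv (\<alpha> 1) powi (int (CARD('a) ^ n) * (1 - int CARD('a))) < 1"
proof -
  note alpha = assms(9-11) and n = assms(12)
  define t where "t = (\<lambda>i. Omega \<alpha> (Suc i) (CARD('a) ^ n - 1))"
  define K where "K = CARD('a) ^ n * (CARD('a) - 1)"
  obtain Z where Z: "fls_sums t Z"
    using fls_sums_exI[of t] absv_Omega_Suc_less[OF alpha n] by (auto simp: t_def)
  have "absv Z = absv (t 0)"
  proof (rule absv_fls_sums_eq_first[OF Z])
    show "1 \<le> i \<Longrightarrow> absv (t i) < absv (t 0)" for i
      using absv_Omega_less_absv_Omega_1[OF alpha _ n, of "Suc i"] by (simp add: t_def)
  qed
  moreover have "absv (t 0) = inverse (absv (\<alpha> 1) ^ K)"
    using absv_Omega_1[OF alpha n] by (simp add: t_def K_def)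
  moreover have "int (CARD('a) ^ n) * (1 - int CARD('a)) = - int K"
    using card_field_ge_2[where 'a='a] by (simp add: K_def of_nat_diff algebra_simps)
  moreover have "1 < absv (\<alpha> 1) ^ K"
    using alpha(2) card_field_ge_2[where 'a='a] by (intro one_less_power) (simp_all add: K_def)
  ultimately show ?thesis
    using Z by (auto simp: t_def power_int_minus inverse_less_1_iff intro!: exI[of _ Z])
qed

end
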